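(* Let $K$ be a non-Archimedean locally compact field of characteristic $p>0$ with group of 1-units $U=1+M_K$. Let $f:U\to U$ be a locally analytic group endomorphism with $f(1+x)=\sum_{n=0}^{\infty}a_nx^n$ for all $x\in M_K$, where $\sum a_nx^n\in 1+x\mathbb{F}_p[[x]]$. If $a_n=0$ for all but finitely many $n$, then $f(1+x)=(1+x)^N$ for some integer $N\ge0$.
   Context: $M_K$ is the maximal ideal of the ring of integers $R_K$ of $K$; with constant field $\mathbb{F}$ of order $q$ and uniformizer $\pi$, $K=\mathbb{F}((\pi))$, $U=1+\pi\mathbb{F}[[\pi]]$, and $|x|=q^{-v(x)}$. A continuous function $f$ on a ball $B_{\alpha,t}=\{u\in R_K:|u-\alpha|\le t\}$, $t=|\rho|$, is analytic there if $f(u)=\sum_{n\ge0}c_n\left(\frac{u-\alpha}{\rho}\right)^n$ with $c_n\in K$, $c_n\to0$; $f:U\to K$ is locally analytic if each $\alpha\in U$ has a ball $B_{\alpha,t_\alpha}\subset U$, $t_\alpha>0$, on which $f$ is analytic. *)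

theory Defs
  imports "HOL-Computational_Algebra.Formal_Laurent_Series"
begin

text \<open>K = F((pi)) is modelled as the type of formal Laurent series over a finite field
  'a (the constant field F, of order q = card UNIV); the uniformizer is fls_X and the
  valuation is fls_subdegree.  The library topology on fls (metric 2^(-v)) coincides with
  the topology of the absolute value q^(-v).\<close>

definition vabs :: "'a::{field,finite} fls \<Rightarrow> real" where
  "vabs x = (if x = 0 then 0 else real (card (UNIV :: 'a set)) powr (- real_of_int (fls_subdegree x)))"

definition RK :: "'a::{field,finite} fls set" where
  "RK = {x. x = 0 \<or> fls_subdegree x \<ge> 0}"

definition MK :: "'a::{field,finite} fls set" where
  "MK = {x. x = 0 \<or> fls_subdegree x > 0}"

definition UK :: "'a::{field,finite} fls set" where
  "UK = (\<lambda>x. 1 + x) ` MK"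

definition vball :: "'a::{field,finite} fls \<Rightarrow> 'a fls \<Rightarrow> 'a fls set" where
  "vball \<alpha> \<rho> = {u \<in> RK. vabs (u - \<alpha>) \<le> vabs \<rho>}"

definition analytic_on_vball ::
  "('a::{field,finite} fls \<Rightarrow> 'a fls) \<Rightarrow> 'a fls \<Rightarrow> 'a fls \<Rightarrow> bool" where
  "analytic_on_vball f \<alpha> \<rho> \<longleftrightarrow>
     continuous_on (vball \<alpha> \<rho>) f \<and>
     (\<exists>c :: nat \<Rightarrow> 'a fls. c \<longlonglongrightarrow> 0 \<and>
        (\<forall>u \<in> vball \<alpha> \<rho>. (\<lambda>n. c n * ((u - \<alpha>) / \<rho>) ^ n) sums f u))"

definition locally_analytic_U :: "('a::{field,finite} fls \<Rightarrow> 'a fls) \<Rightarrow> bool" where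
  "locally_analytic_U f \<longleftrightarrow>
     (\<forall>\<alpha> \<in> UK. \<exists>\<rho>. \<rho> \<noteq> 0 \<and> vball \<alpha> \<rho> \<subseteq> UK \<and> analytic_on_vball f \<alpha> \<rho>)"

end

theory Submission
  imports Defs "HOL-Computational_Algebra.Polynomial"
begin

text \<open>Since only finitely many \<open>a n\<close> are nonzero, \<open>f\<close> agrees on \<open>U\<close> with a polynomial \<open>G\<close>,
  and \<open>G (u v) = G u G v\<close> holds for all \<open>u, v\<close> in the infinite set \<open>U\<close>. Fixing \<open>u\<close>, the
  polynomial \<open>G (u X) - G u \<cdot> G\<close> has infinitely many roots, so it vanishes; comparing
  coefficients at a degree \<open>k\<close> with \<open>coeff G k \<noteq> 0\<close> gives \<open>G u = u ^ k\<close>.\<close>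

lemma MK_add:
  assumes "x \<in> MK" "y \<in> MK"
  shows "x + y \<in> MK"
proof (cases "x + y = 0")
  case False
  then have "fls_subdegree (x + y) \<ge> min (fls_subdegree x) (fls_subdegree y)"
    by (rule fls_plus_subdegree)
  moreover have "x = 0 \<or> y = 0 \<or> min (fls_subdegree x) (fls_subdegree y) > 0"
    using assms by (auto simp: MK_def)
  ultimately show ?thesis
    using assms by (auto simp: MK_def)
qed (simp add: MK_def)

lemma MK_mult:
  assumes "x \<in> MK" "y \<in> MK"
  shows "x * y \<in> MK"
  using assms by (cases "x = 0 \<or> y = 0") (auto simp: MK_def fls_subdegree_mult)

lemma UK_mult:
  assumes "u \<in> UK" "v \<in> UK"
  shows "u * v \<in> UK"
proof -
  obtain x y where "x \<in> MK" "y \<in> MK" "u = 1 + x" "v = 1 + y"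
    using assms by (auto simp: UK_def)
  then have "u * v = 1 + (x + y + x * y)" "x + y + x * y \<in> MK"
    by (auto simp: algebra_simps MK_add MK_mult)
  then show ?thesis
    by (auto simp: UK_def)
qed

lemma infinite_UK: "infinite (UK :: 'a::{field,finite} fls set)"
proof
  assume "finite (UK :: 'a fls set)"
  moreover have "range (\<lambda>n. 1 + (fls_X :: 'a fls) ^ Suc n) \<subseteq> UK"
    by (auto simp: UK_def MK_def fls_subdegree_fls_X_pow)
  moreover have "inj (\<lambda>n. 1 + (fls_X :: 'a fls) ^ Suc n)"
  proof (rule injI)
    fix m n :: nat
    assume "1 + (fls_X :: 'a fls) ^ Suc m = 1 + fls_X ^ Suc n"
    then have "fls_subdegree ((fls_X :: 'a fls) ^ Suc m) = fls_subdegree ((fls_X :: 'a fls) ^ Suc n)"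
      by simp
    then show "m = n"
      by (simp only: fls_subdegree_fls_X_pow)
  qed
  ultimately show False
    by (meson finite_imageD finite_subset infinite_UNIV_nat)
qed

lemma poly_eq_0_if_infinite_roots:
  fixes p :: "'a::idom poly"
  assumes "infinite S" "\<And>x. x \<in> S \<Longrightarrow> poly p x = 0"
  shows "p = 0"
  using assms poly_roots_finite[of p] finite_subset[of S "{x. poly p x = 0}"] by blast

lemma poly_multiplicative_eq_power:
  fixes p :: "'a::idom poly"
  assumes "infinite S"
    and mult: "\<And>v. v \<in> S \<Longrightarrow> poly p (u * v) = poly p u * poly p v"
    and k: "coeff p k \<noteq> 0"
  shows "poly p u = u ^ k"
proof -
  define H where "H = pcompose p [:0, u:] - smult (poly p u) p"
  have "poly H v = 0" if "v \<in> S" for v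
    using mult[OF that] by (simp add: H_def poly_pcompose mult.commute)
  with \<open>infinite S\<close> have "H = 0"
    by (rule poly_eq_0_if_infinite_roots)
  then have "coeff (pcompose p [:0, u:]) k = coeff (smult (poly p u) p) k"
    by (simp add: H_def)
  then have "u ^ k * coeff p k = poly p u * coeff p k"
    by (simp add: coeff_pcompose_linear)
  then show ?thesis
    using k by simp
qed

lemma sums_finite_support_eq_poly:
  fixes c :: "nat \<Rightarrow> 'a::{comm_ring_1,t2_space}"
  assumes "finite {n. c n \<noteq> 0}" "(\<lambda>n. c n * x ^ n) sums s"
  shows "s = poly (\<Sum>n | c n \<noteq> 0. monom (c n) n) x"
proof -
  have "(\<lambda>n. c n * x ^ n) sums (\<Sum>n | c n \<noteq> 0. c n * x ^ n)"
    by (rule sums_finite) (use assms(1) in auto)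
  with assms(2) show ?thesis
    by (simp add: poly_sum poly_monom sums_unique2)
qed

lemma coeff_0_sum_monom:
  assumes "finite {n. c n \<noteq> 0}"
  shows "coeff (\<Sum>n | c n \<noteq> 0. monom (c n) n) 0 = c 0"
  using assms by (cases "c 0 = 0") (simp_all add: coeff_sum coeff_monom)

theorem lemma2p3:
  fixes f :: "'a::{field,finite} fls \<Rightarrow> 'a fls"
    and a :: "nat \<Rightarrow> 'a"
  assumes maps: "\<And>u. u \<in> UK \<Longrightarrow> f u \<in> UK"
    and hom: "\<And>u v. u \<in> UK \<Longrightarrow> v \<in> UK \<Longrightarrow> f (u * v) = f u * f v"
    and loc_an: "locally_analytic_U f"
    and coeff_Fp: "\<And>n. a n \<in> range of_nat"
    and a0: "a 0 = 1"
    and expand: "\<And>x. x \<in> MK \<Longrightarrow> (\<lambda>n. fls_const (a n) * x ^ n) sums f (1 + x)"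
    and fin: "finite {n. a n \<noteq> 0}"
  shows "\<exists>N::nat. \<forall>x \<in> MK. f (1 + x) = (1 + x) ^ N"
proof -
  define c where "c n = fls_const (a n)" for n
  define Q where "Q = (\<Sum>n | c n \<noteq> 0. monom (c n) n)"
  define G where "G = pcompose Q [:-1, 1:]"
  have fin_c: "finite {n. c n \<noteq> 0}"
    using fin by (simp add: c_def)
  have f_eq_G: "f u = poly G u" if u: "u \<in> UK" for u
  proof -
    obtain x where "x \<in> MK" "u = 1 + x"
      using u unfolding UK_def by blast
    then show ?thesis
      using sums_finite_support_eq_poly[OF fin_c] expand
      by (simp add: G_def Q_def c_def poly_pcompose)
  qed
  have "poly G 1 = 1"
    using coeff_0_sum_monom[OF fin_c] a0 by (simp add: G_def Q_def c_def poly_pcompose poly_0_coeff_0)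
  then obtain k where k: "coeff G k \<noteq> 0"
    by (metis leading_coeff_0_iff one_neq_zero poly_0)
  have "poly G u = u ^ k" if u: "u \<in> UK" for u
  proof (rule poly_multiplicative_eq_power[OF infinite_UK _ k])
    fix v :: "'a fls"
    assume "v \<in> UK"
    with u show "poly G (u * v) = poly G u * poly G v"
      by (simp add: hom UK_mult f_eq_G[symmetric])
  qed
  then show ?thesis
    by (auto simp: f_eq_G UK_def)
qed

end
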